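(* Let $\psi=\mathcal{X}_{[0,1/2)}-\mathcal{X}_{[1/2,1)}$ be the Haar wavelet, and let $\{a_I:I\in\mathcal{D}\}$ be independent random variables with $\sum_I\mathscr{E}|a_I|<\infty$ and $a_I\in\mathscr{G}(\nu)$ for all $I$, for some $\nu>0$. For $x\neq y$ in $\mathbb{R}^+$ let $K(x,y;\cdot)=\sum_{I\in\mathcal{D}}a_I\psi_I(x)\psi_I(y)\in L^2(\Omega,d\mathscr{P})$. Then there is a constant $B$ such that for all $x,y,x',y'\in\mathbb{R}^+$ with $x\ne y$: (a) $\|K(x,y;\cdot)\|_{L^2(\Omega,d\mathscr{P})}\leq \dfrac{B}{\delta(x,y)}$; (b.i) $\|K(x',y;\cdot)-K(x,y;\cdot)\|_{L^2(\Omega,d\mathscr{P})}\leq B\dfrac{\delta(x',x)}{\delta(x,y)^2}$ whenever $2\delta(x',x)\leq\delta(x,y)$; (b.ii) $\|K(x,y';\cdot)-K(x,y;\cdot)\|_{L^2(\Omega,d\mathscr{P})}\leq B\dfrac{\delta(y',y)}{\delta(x,y)^2}$ whenever $2\delta(y',y)\leq\delta(x,y)$.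
   Context: $\mathcal{D}=\bigcup_{j\in\mathbb{Z}}\{[k2^{-j},(k+1)2^{-j}):k\in\mathbb{Z}\}$ is the family of dyadic intervals of $\mathbb{R}$, and $\mathcal{D}^+$ the dyadic intervals contained in $\mathbb{R}^+=[0,\infty)$; for $I=[k2^{-j},(k+1)2^{-j})$, $\psi_I(x)=2^{j/2}\psi(2^jx-k)$. The dyadic distance on $\mathbb{R}^+$ is $\delta(x,y)=\inf\{|I|: x,y\in I,\ I\in\mathcal{D}^+\}$ (with $|I|$ the length of $I$). For an integrable random variable $X$, $\eta_{X-\mathscr{E}X}(\lambda)=\log \mathscr{E}e^{\lambda(X-\mathscr{E}X)}$, and $X\in\mathscr{G}(\nu)$ means $X$ is integrable and $\eta_{X-\mathscr{E}X}(\lambda)\leq \lambda^2\nu/2$ for all $\lambda\in\mathbb{R}$. *)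

theory Defs
  imports "HOL-Probability.Probability"
begin

definition dyadic_interval :: "int \<times> int \<Rightarrow> real set" where
  "dyadic_interval I = {real_of_int (snd I) * 2 powr (- real_of_int (fst I)) ..<
                        (real_of_int (snd I) + 1) * 2 powr (- real_of_int (fst I))}"

definition dyadic_len :: "int \<times> int \<Rightarrow> real" where
  "dyadic_len I = 2 powr (- real_of_int (fst I))"

definition haar :: "real \<Rightarrow> real" where
  "haar t = indicator {0..<1/2} t - indicator {1/2..<1} t"

definition haar_I :: "int \<times> int \<Rightarrow> real \<Rightarrow> real" where
  "haar_I I x = 2 powr (real_of_int (fst I) / 2) *
                haar (2 powr (real_of_int (fst I)) * x - real_of_int (snd I))"

definition dyadic_dist :: "real \<Rightarrow> real \<Rightarrow> real" where
  "dyadic_dist x y = Inf {dyadic_len I | I. snd I \<ge> 0 \<and> x \<in> dyadic_interval I \<and> y \<in> dyadic_interval I}"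

definition eta_centered :: "'a measure \<Rightarrow> ('a \<Rightarrow> real) \<Rightarrow> real \<Rightarrow> real" where
  "eta_centered M X l = ln (integral\<^sup>L M (\<lambda>\<omega>. exp (l * (X \<omega> - integral\<^sup>L M X))))"

text \<open>X \<in> G(nu); the moment generating function is required to be finite.\<close>
definition subgaussian :: "'a measure \<Rightarrow> real \<Rightarrow> ('a \<Rightarrow> real) \<Rightarrow> bool" where
  "subgaussian M \<nu> X \<longleftrightarrow> integrable M X \<and>
     (\<forall>l. integrable M (\<lambda>\<omega>. exp (l * (X \<omega> - integral\<^sup>L M X))) \<and>
          eta_centered M X l \<le> l\<^sup>2 * \<nu> / 2)"

definition kernelK :: "(int \<times> int \<Rightarrow> 'a \<Rightarrow> real) \<Rightarrow> real \<Rightarrow> real \<Rightarrow> 'a \<Rightarrow> real" where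
  "kernelK a x y \<omega> = (\<Sum>\<^sub>\<infinity>I. a I \<omega> * haar_I I x * haar_I I y)"

definition L2norm :: "'a measure \<Rightarrow> ('a \<Rightarrow> real) \<Rightarrow> real" where
  "L2norm M f = sqrt (integral\<^sup>L M (\<lambda>\<omega>. (f \<omega>)\<^sup>2))"

end

theory Submission
  imports Defs
begin

text \<open>
  Let \<open>J\<close> be the finest level on which \<open>x\<close> and \<open>y\<close> lie in a common dyadic interval, so
  that \<open>\<delta>(x,y) = 2\<^sup>-\<^sup>J\<close>. Only the intervals containing both points contribute to
  \<open>K(x,y)\<close>, one on each level \<open>j \<le> J\<close>, and there \<open>|\<psi>\<^sub>I(x)\<psi>\<^sub>I(y)| \<le> 2\<^sup>j\<close>.
  Cauchy-Schwarz with the geometric weights \<open>2\<^sup>j\<close> bounds \<open>E K\<^sup>2\<close> by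
  \<open>(2/\<delta>(x,y))\<^sup>2 sup\<^sub>I E a\<^sub>I\<^sup>2\<close>, and the sub-Gaussian bound at \<open>\<lambda> = \<plusminus>1\<close> together with the
  summability of \<open>E|a\<^sub>I|\<close> bounds the second moments uniformly. The smoothness estimates
  hold trivially: if \<open>2\<delta>(x',x) \<le> \<delta>(x,y)\<close>, then \<open>x'\<close> and \<open>x\<close> share the dyadic interval
  of level \<open>J + 1\<close>, so every product \<open>\<psi>\<^sub>I(x')\<psi>\<^sub>I(y)\<close> equals \<open>\<psi>\<^sub>I(x)\<psi>\<^sub>I(y)\<close> and the
  Haar kernel is locally constant.
\<close>

definition dyadic_index :: "real \<Rightarrow> int \<Rightarrow> int" where
  "dyadic_index z j = \<lfloor>2 powr real_of_int j * z\<rfloor>"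

lemma mem_dyadic_interval_iff: "z \<in> dyadic_interval (j, k) \<longleftrightarrow> dyadic_index z j = k"
proof -
  have pos: "2 powr real_of_int j > 0" by simp
  have "z \<in> dyadic_interval (j, k) \<longleftrightarrow>
      real_of_int k / 2 powr real_of_int j \<le> z \<and> z < (real_of_int k + 1) / 2 powr real_of_int j"
    unfolding dyadic_interval_def by (simp add: powr_minus divide_inverse)
  also have "\<dots> \<longleftrightarrow> real_of_int k \<le> 2 powr real_of_int j * z \<and> 2 powr real_of_int j * z < real_of_int k + 1"
    using pos by (simp add: field_simps)
  finally show ?thesis unfolding dyadic_index_def floor_eq_iff .
qed

lemma dyadic_index_coarsen:
  assumes "i \<le> j"
  shows "dyadic_index z i = dyadic_index z j div 2 ^ nat (j - i)"
proof -
  have "2 powr real_of_int j = 2 powr (real_of_int i + real (nat (j - i)))"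
    using assms by simp
  also have "\<dots> = 2 powr real_of_int i * 2 ^ nat (j - i)"
    by (simp add: powr_add powr_realpow)
  finally have "2 powr real_of_int i * z = 2 powr real_of_int j * z / real_of_int (2 ^ nat (j - i))"
    by simp
  moreover have "\<lfloor>2 powr real_of_int j * z / real_of_int (2 ^ nat (j - i))\<rfloor>
      = \<lfloor>2 powr real_of_int j * z\<rfloor> div 2 ^ nat (j - i)"
    by (rule floor_divide_real_eq_div) simp
  ultimately show ?thesis
    unfolding dyadic_index_def by simp
qed

lemma dyadic_index_eq_downward:
  "dyadic_index x j = dyadic_index y j \<Longrightarrow> i \<le> j \<Longrightarrow> dyadic_index x i = dyadic_index y i"
  by (simp add: dyadic_index_coarsen)

lemma dyadic_index_nonneg: "0 \<le> z \<Longrightarrow> 0 \<le> dyadic_index z j"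
  unfolding dyadic_index_def by simp

lemma haar_I_eq:
  "haar_I (j, k) z = 2 powr (real_of_int j / 2) *
     (if dyadic_index z (j + 1) = 2 * k then 1
      else if dyadic_index z (j + 1) = 2 * k + 1 then -1 else 0)"
proof -
  have scale: "2 powr real_of_int (j + 1) * z = 2 * (2 powr real_of_int j * z)"
    by (simp add: powr_add)
  define t where "t = 2 powr real_of_int j * z"
  have "haar (t - real_of_int k) =
      (if \<lfloor>2 * t\<rfloor> = 2 * k then 1 else if \<lfloor>2 * t\<rfloor> = 2 * k + 1 then -1 else 0)"
    unfolding haar_def floor_eq_iff by (auto simp: indicator_def)
  then show ?thesis
    unfolding haar_I_def dyadic_index_def scale by (simp add: t_def)
qed

lemma dyadic_index_eq_if_haar_I_nonzero: "haar_I (j, k) z \<noteq> 0 \<Longrightarrow> dyadic_index z j = k"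
  using dyadic_index_coarsen[of j "j + 1" z] unfolding haar_I_eq by (auto split: if_splits)

lemma abs_haar_I_le: "\<bar>haar_I (j, k) z\<bar> \<le> 2 powr (real_of_int j / 2)"
  unfolding haar_I_eq by auto

lemma abs_haar_I_mult_le: "\<bar>haar_I (j, k) x * haar_I (j, k') y\<bar> \<le> 2 powr real_of_int j"
proof -
  have "\<bar>haar_I (j, k) x * haar_I (j, k') y\<bar> \<le> 2 powr (real_of_int j / 2) * 2 powr (real_of_int j / 2)"
    unfolding abs_mult by (intro mult_mono abs_haar_I_le) auto
  also have "\<dots> = 2 powr real_of_int j" by (simp flip: powr_add)
  finally show ?thesis .
qed

lemma ex_dyadic_index_eq:
  assumes "0 \<le> x" "0 \<le> y"
  shows "\<exists>j. dyadic_index x j = dyadic_index y j"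
proof -
  obtain n :: nat where n: "max x y < 2 ^ n"
    using real_arch_pow[of 2 "max x y"] by auto
  have "2 powr real_of_int (- int n) = inverse (2 ^ n)"
    by (simp add: powr_minus powr_realpow)
  moreover have "inverse (2 ^ n) * x < 1" "inverse (2 ^ n) * y < 1"
    using n by (auto simp: field_simps)
  ultimately have "dyadic_index x (- int n) = 0" "dyadic_index y (- int n) = 0"
    using assms unfolding dyadic_index_def floor_eq_iff by auto
  then show ?thesis by metis
qed

lemma dyadic_index_eq_imp_dist_less:
  assumes "dyadic_index x j = dyadic_index y j"
  shows "2 powr real_of_int j * \<bar>x - y\<bar> < 1"
proof -
  have "\<bar>2 powr real_of_int j * x - 2 powr real_of_int j * y\<bar> < 1"
    using assms unfolding dyadic_index_def by linarith
  then show ?thesis by (simp add: right_diff_distrib[symmetric] abs_mult)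
qed

lemma dyadic_index_eq_bdd_above:
  assumes "x \<noteq> y"
  obtains n where "\<And>j. dyadic_index x j = dyadic_index y j \<Longrightarrow> j < n"
proof
  fix j assume "dyadic_index x j = dyadic_index y j"
  then have "2 powr real_of_int j < 1 / \<bar>x - y\<bar>"
    using dyadic_index_eq_imp_dist_less assms by (simp add: field_simps)
  then have "real_of_int j < log 2 (1 / \<bar>x - y\<bar>)"
    using assms by (simp add: less_log_iff)
  then show "j < \<lceil>log 2 (1 / \<bar>x - y\<bar>)\<rceil>" by linarith
qed

lemma int_set_has_greatest:
  fixes X :: "int set"
  assumes "i \<in> X" "\<And>j. j \<in> X \<Longrightarrow> j < n"
  shows "\<exists>J \<in> X. \<forall>j \<in> X. j \<le> J"
proof -
  have fin: "finite (X \<inter> {i..n})" and mem: "i \<in> X \<inter> {i..n}"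
    using assms(1) assms(2)[OF assms(1)] by auto
  define J where "J = Max (X \<inter> {i..n})"
  have J_ge: "j \<le> J" if "j \<in> X \<inter> {i..n}" for j
    using Max_ge[OF fin that] unfolding J_def .
  have "J \<in> X"
    using Max_in[OF fin] mem unfolding J_def by blast
  moreover have "j \<le> J" if "j \<in> X" for j
    using J_ge[of j] J_ge[OF mem] assms(2)[OF that] that by (cases "i \<le> j") auto
  ultimately show ?thesis by blast
qed

definition separation_level :: "real \<Rightarrow> real \<Rightarrow> int" where
  "separation_level x y = (GREATEST j. dyadic_index x j = dyadic_index y j)"

lemma dyadic_index_eq_iff_le_separation_level:
  assumes "0 \<le> x" "0 \<le> y" "x \<noteq> y"
  shows "dyadic_index x j = dyadic_index y j \<longleftrightarrow> j \<le> separation_level x y"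
proof -
  obtain i where "dyadic_index x i = dyadic_index y i"
    using ex_dyadic_index_eq assms by blast
  moreover obtain n where "\<And>j. dyadic_index x j = dyadic_index y j \<Longrightarrow> j < n"
    using dyadic_index_eq_bdd_above assms by blast
  ultimately obtain J where J: "dyadic_index x J = dyadic_index y J"
      "\<And>j. dyadic_index x j = dyadic_index y j \<Longrightarrow> j \<le> J"
    using int_set_has_greatest[of i "{j. dyadic_index x j = dyadic_index y j}" n] by auto
  then have "separation_level x y = J"
    unfolding separation_level_def by (rule Greatest_equality)
  then show ?thesis
    using J dyadic_index_eq_downward by blast
qed

lemma dyadic_dist_eq_Inf_levels:
  assumes "0 \<le> x"
  shows "dyadic_dist x y = Inf {2 powr - real_of_int j | j. dyadic_index x j = dyadic_index y j}"
proof -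
  have "{dyadic_len I | I. snd I \<ge> 0 \<and> x \<in> dyadic_interval I \<and> y \<in> dyadic_interval I}
      = {2 powr - real_of_int j | j. dyadic_index x j = dyadic_index y j}"
  proof safe
    fix I :: "int \<times> int"
    assume "x \<in> dyadic_interval I" "y \<in> dyadic_interval I"
    then show "\<exists>j. dyadic_len I = 2 powr - real_of_int j \<and> dyadic_index x j = dyadic_index y j"
      by (cases I) (auto simp: mem_dyadic_interval_iff dyadic_len_def)
  next
    fix j assume "dyadic_index x j = dyadic_index y j"
    then show "\<exists>I. 2 powr - real_of_int j = dyadic_len I \<and> 0 \<le> snd I \<and>
        x \<in> dyadic_interval I \<and> y \<in> dyadic_interval I"
      using dyadic_index_nonneg[OF assms, of j]
      by (intro exI[of _ "(j, dyadic_index x j)"]) (auto simp: mem_dyadic_interval_iff dyadic_len_def)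
  qed
  then show ?thesis unfolding dyadic_dist_def by simp
qed

lemma dyadic_dist_nonneg:
  assumes "0 \<le> x" "0 \<le> y"
  shows "0 \<le> dyadic_dist x y"
  unfolding dyadic_dist_eq_Inf_levels[OF assms(1)]
  using ex_dyadic_index_eq[OF assms] by (intro cInf_greatest) auto

lemma dyadic_dist_eq_separation_level:
  assumes "0 \<le> x" "0 \<le> y" "x \<noteq> y"
  shows "dyadic_dist x y = 2 powr - real_of_int (separation_level x y)"
  unfolding dyadic_dist_eq_Inf_levels[OF assms(1)] dyadic_index_eq_iff_le_separation_level[OF assms]
  by (rule cInf_eq_minimum) auto

lemma dyadic_dist_commute: "dyadic_dist x y = dyadic_dist y x"
  unfolding dyadic_dist_def by (simp add: conj_commute)

lemma dyadic_index_eq_if_dyadic_dist_le: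
  assumes "0 \<le> x" "0 \<le> y" "0 \<le> x'" "x \<noteq> y"
    and close: "2 * dyadic_dist x' x \<le> dyadic_dist x y"
    and j: "j \<le> separation_level x y + 1"
  shows "dyadic_index x' j = dyadic_index x j"
proof (cases "x' = x")
  case False
  have "2 powr (1 - real_of_int (separation_level x' x)) \<le> 2 powr - real_of_int (separation_level x y)"
    using close unfolding dyadic_dist_eq_separation_level[OF assms(1,2,4)]
      dyadic_dist_eq_separation_level[OF assms(3,1) False]
    by (simp add: powr_diff powr_minus divide_inverse)
  then have "separation_level x y + 1 \<le> separation_level x' x" by simp
  then show ?thesis
    using j dyadic_index_eq_iff_le_separation_level[OF assms(3,1) False] by simp
qed simp

lemma haar_products_eq:
  assumes x'x: "\<And>j. j \<le> J + 1 \<Longrightarrow> dyadic_index x' j = dyadic_index x j"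
    and xy: "\<And>j. dyadic_index x j = dyadic_index y j \<longleftrightarrow> j \<le> J"
  shows "haar_I I x' * haar_I I y = haar_I I x * haar_I I y"
proof -
  obtain j k where I: "I = (j, k)" by (cases I)
  consider "j \<le> J" | "haar_I I y = 0" | "J < j" "dyadic_index y j = k"
    using dyadic_index_eq_if_haar_I_nonzero I by force
  then show ?thesis
  proof cases
    case 1
    then show ?thesis using x'x unfolding I haar_I_eq by simp
  next
    case 3
    then have "dyadic_index x j \<noteq> k" using xy by force
    moreover have "dyadic_index x' j \<noteq> k"
    proof
      assume "dyadic_index x' j = k"
      then have "dyadic_index x' (J + 1) = dyadic_index y (J + 1)"
        using 3 dyadic_index_eq_downward[of x' j y "J + 1"] by simp
      then show False using x'x[of "J + 1"] xy[of "J + 1"] by simp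
    qed
    ultimately show ?thesis unfolding I using dyadic_index_eq_if_haar_I_nonzero by metis
  qed simp
qed

lemma kernelK_eq_if_dyadic_dist_le:
  assumes "0 \<le> x" "0 \<le> y" "0 \<le> x'" "x \<noteq> y" "2 * dyadic_dist x' x \<le> dyadic_dist x y"
  shows "kernelK a x' y = kernelK a x y"
proof -
  have products: "haar_I I x' * haar_I I y = haar_I I x * haar_I I y" for I
    using dyadic_index_eq_if_dyadic_dist_le[OF assms]
      dyadic_index_eq_iff_le_separation_level[OF assms(1,2,4)]
    by (rule haar_products_eq)
  show ?thesis unfolding kernelK_def by (simp only: mult.assoc products)
qed

lemma kernelK_commute: "kernelK a x y = kernelK a y x"
  unfolding kernelK_def by (simp add: mult.commute mult.left_commute)

lemma abs_haar_products_le: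
  assumes "0 \<le> x" "0 \<le> y" "x \<noteq> y"
  shows "\<bar>haar_I (separation_level x y - int n, k) x * haar_I (separation_level x y - int n, k') y\<bar>
    \<le> (1/2) ^ n / dyadic_dist x y"
proof -
  define J where "J = separation_level x y"
  have "\<bar>haar_I (J - int n, k) x * haar_I (J - int n, k') y\<bar> \<le> 2 powr real_of_int (J - int n)"
    by (rule abs_haar_I_mult_le)
  also have "\<dots> = 2 powr real_of_int J / 2 powr real n"
    by (simp only: of_int_diff of_int_of_nat_eq powr_diff)
  also have "\<dots> = (1/2) ^ n / dyadic_dist x y"
    unfolding dyadic_dist_eq_separation_level[OF assms] J_def
    by (smt (verit) divide_powr_uminus mult.commute power_one_over powr_minus_divide powr_realpow)
  finally show ?thesis unfolding J_def .
qed

lemma kernelK_eq_series: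
  assumes "0 \<le> x" "0 \<le> y" "x \<noteq> y"
  obtains g :: "nat \<Rightarrow> int \<times> int" and w :: "nat \<Rightarrow> real"
  where "\<And>n. \<bar>w n\<bar> \<le> (1/2) ^ n / dyadic_dist x y"
    and "\<And>a \<omega>. kernelK a x y \<omega> = (\<Sum>\<^sub>\<infinity>n. a (g n) \<omega> * w n)"
proof
  define J where "J = separation_level x y"
  define g where "g n = (J - int n, dyadic_index x (J - int n))" for n
  define c where "c I = haar_I I x * haar_I I y" for I
  show "\<bar>c (g n)\<bar> \<le> (1/2) ^ n / dyadic_dist x y" for n
    unfolding c_def g_def J_def using assms by (rule abs_haar_products_le)
  have "inj g"
  proof (rule injI)
    fix m n assume "g m = g n"
    then have "J - int m = J - int n" unfolding g_def by simp
    then show "m = n" by simp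
  qed
  have support: "I \<in> range g" if "c I \<noteq> 0" for I
  proof -
    obtain j k where I: "I = (j, k)" by (cases I)
    have "dyadic_index x j = k" "dyadic_index y j = k"
      using that dyadic_index_eq_if_haar_I_nonzero unfolding I c_def by fastforce+
    then have "j \<le> J"
      using dyadic_index_eq_iff_le_separation_level[OF assms] unfolding J_def by metis
    then have "I = g (nat (J - j))"
      unfolding g_def I using \<open>dyadic_index x j = k\<close> by simp
    then show ?thesis by simp
  qed
  fix a :: "int \<times> int \<Rightarrow> 'a \<Rightarrow> real" and \<omega>
  have "kernelK a x y \<omega> = (\<Sum>\<^sub>\<infinity>I. a I \<omega> * c I)"
    unfolding kernelK_def c_def by (simp add: mult.assoc)
  also have "\<dots> = (\<Sum>\<^sub>\<infinity>I\<in>range g. a I \<omega> * c I)"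
    by (rule infsum_cong_neutral) (use support in auto)
  also have "\<dots> = (\<Sum>\<^sub>\<infinity>n. a (g n) \<omega> * c (g n))"
    using infsum_reindex[OF \<open>inj g\<close>] by (simp add: comp_def)
  finally show "kernelK a x y \<omega> = (\<Sum>\<^sub>\<infinity>n. a (g n) \<omega> * c (g n))" .
qed

lemma infsum_nat_real_eq:
  fixes f :: "nat \<Rightarrow> real"
  shows "(\<Sum>\<^sub>\<infinity>n. f n) = (if summable (\<lambda>n. \<bar>f n\<bar>) then \<Sum>n. f n else 0)"
proof (cases "summable (\<lambda>n. \<bar>f n\<bar>)")
  case True
  then have "summable f" by (rule summable_rabs_cancel)
  then have "(f has_sum (\<Sum>n. f n)) UNIV"
    using True by (intro norm_summable_imp_has_sum summable_sums) auto
  then show ?thesis using True by (simp add: infsumI)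
next
  case False
  then have "\<not> f summable_on UNIV"
    using summable_on_iff_abs_summable_on_real[of f UNIV]
      summable_on_UNIV_nonneg_real_iff[of "\<lambda>n. \<bar>f n\<bar>"] by simp
  then show ?thesis using False by (simp add: infsum_not_exists)
qed

lemma summable_abs_iff_bounded_partial_sums:
  fixes f :: "nat \<Rightarrow> real"
  shows "summable (\<lambda>n. \<bar>f n\<bar>) \<longleftrightarrow> (\<exists>B::nat. \<forall>N. (\<Sum>n<N. \<bar>f n\<bar>) \<le> real B)"
proof
  assume "summable (\<lambda>n. \<bar>f n\<bar>)"
  then have "(\<Sum>n<N. \<bar>f n\<bar>) \<le> (\<Sum>n. \<bar>f n\<bar>)" for N
    by (intro sum_le_suminf) auto
  then have "(\<Sum>n<N. \<bar>f n\<bar>) \<le> real (nat \<lceil>\<Sum>n. \<bar>f n\<bar>\<rceil>)" for N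
    by (meson order_trans real_nat_ceiling_ge)
  then show "\<exists>B::nat. \<forall>N. (\<Sum>n<N. \<bar>f n\<bar>) \<le> real B" by blast
qed (auto intro: summableI_nonneg_bounded)

lemma borel_measurable_infsum_nat:
  fixes f :: "nat \<Rightarrow> 'a \<Rightarrow> real"
  assumes [measurable]: "\<And>n. f n \<in> borel_measurable M"
  shows "(\<lambda>\<omega>. \<Sum>\<^sub>\<infinity>n. f n \<omega>) \<in> borel_measurable M"
  unfolding infsum_nat_real_eq summable_abs_iff_bounded_partial_sums suminf_eq_lim
  by measurable

lemma sum_square_le_weighted:
  fixes f b v :: "'i \<Rightarrow> real"
  assumes "\<And>n. \<bar>f n\<bar> \<le> v n * \<bar>b n\<bar>" and v_nonneg: "\<And>n. 0 \<le> v n"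
  shows "(\<Sum>n\<in>A. f n)\<^sup>2 \<le> (\<Sum>n\<in>A. v n) * (\<Sum>n\<in>A. v n * (b n)\<^sup>2)"
proof -
  have "\<bar>\<Sum>n\<in>A. f n\<bar> \<le> (\<Sum>n\<in>A. v n * \<bar>b n\<bar>)"
    by (rule order.trans[OF sum_abs sum_mono[OF assms(1)]])
  then have "(\<Sum>n\<in>A. f n)\<^sup>2 \<le> (\<Sum>n\<in>A. v n * \<bar>b n\<bar>)\<^sup>2"
    by (metis abs_ge_zero power2_abs power_mono)
  also have "(\<Sum>n\<in>A. v n * \<bar>b n\<bar>) = (\<Sum>n\<in>A. sqrt (v n) * (sqrt (v n) * \<bar>b n\<bar>))"
    by (rule sum.cong) (auto simp: v_nonneg mult.assoc[symmetric])
  also have "(\<dots>)\<^sup>2 \<le> (\<Sum>n\<in>A. (sqrt (v n))\<^sup>2) * (\<Sum>n\<in>A. (sqrt (v n) * \<bar>b n\<bar>)\<^sup>2)"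
    by (rule Cauchy_Schwarz_ineq_sum)
  finally show ?thesis by (simp add: v_nonneg power_mult_distrib)
qed

lemma infsum_square_le_weighted:
  fixes f b v :: "nat \<Rightarrow> real"
  assumes fb: "\<And>n. \<bar>f n\<bar> \<le> v n * \<bar>b n\<bar>" and v_nonneg: "\<And>n. 0 \<le> v n"
    and partial_le: "\<And>N. (\<Sum>n<N. v n) \<le> V"
  shows "ennreal ((\<Sum>\<^sub>\<infinity>n. f n)\<^sup>2) \<le> ennreal V * (\<Sum>n. ennreal (v n * (b n)\<^sup>2))"
proof (cases "summable (\<lambda>n. \<bar>f n\<bar>)")
  case False
  then show ?thesis by (simp add: infsum_nat_real_eq)
next
  case True
  then have "summable f" by (rule summable_rabs_cancel)
  have infsum_eq: "(\<Sum>\<^sub>\<infinity>n. f n) = (\<Sum>n. f n)"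
    using True by (simp add: infsum_nat_real_eq)
  have partial_sums: "(\<lambda>N. ennreal ((\<Sum>n<N. f n)\<^sup>2)) \<longlonglongrightarrow> ennreal ((\<Sum>n. f n)\<^sup>2)"
    by (intro tendsto_ennrealI tendsto_power summable_LIMSEQ \<open>summable f\<close>)
  have partial_le_bound: "ennreal ((\<Sum>n<N. f n)\<^sup>2) \<le> ennreal V * (\<Sum>n. ennreal (v n * (b n)\<^sup>2))" for N
  proof -
    have "(\<Sum>n<N. f n)\<^sup>2 \<le> (\<Sum>n<N. v n) * (\<Sum>n<N. v n * (b n)\<^sup>2)"
      by (rule sum_square_le_weighted[OF fb v_nonneg])
    also have "\<dots> \<le> V * (\<Sum>n<N. v n * (b n)\<^sup>2)"
      by (intro mult_right_mono partial_le sum_nonneg) (simp add: v_nonneg)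
    finally have "ennreal ((\<Sum>n<N. f n)\<^sup>2) \<le> ennreal (V * (\<Sum>n<N. v n * (b n)\<^sup>2))"
      by (rule ennreal_leI)
    also have "\<dots> = ennreal V * ennreal (\<Sum>n<N. v n * (b n)\<^sup>2)"
      using partial_le[of 0] by (intro ennreal_mult) (simp_all add: v_nonneg sum_nonneg)
    also have "ennreal (\<Sum>n<N. v n * (b n)\<^sup>2) = (\<Sum>n<N. ennreal (v n * (b n)\<^sup>2))"
      by (rule sum_ennreal[symmetric]) (simp add: v_nonneg)
    also have "\<dots> \<le> (\<Sum>n. ennreal (v n * (b n)\<^sup>2))"
      by (rule sum_le_suminf) auto
    finally show ?thesis by (simp add: mult_left_mono)
  qed
  show ?thesis
    unfolding infsum_eq by (rule LIMSEQ_le_const2[OF partial_sums]) (use partial_le_bound in blast)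
qed

lemma nn_integral_weighted_series_square_le:
  fixes X :: "nat \<Rightarrow> 'a \<Rightarrow> real" and w v :: "nat \<Rightarrow> real"
  assumes [measurable]: "\<And>n. X n \<in> borel_measurable M"
    and moment: "\<And>n. (\<integral>\<^sup>+\<omega>. ennreal ((X n \<omega>)\<^sup>2) \<partial>M) \<le> ennreal C"
    and w_le: "\<And>n. \<bar>w n\<bar> \<le> v n" and "v sums V"
  shows "(\<integral>\<^sup>+\<omega>. ennreal ((\<Sum>\<^sub>\<infinity>n. X n \<omega> * w n)\<^sup>2) \<partial>M) \<le> ennreal V * ennreal V * ennreal C"
proof -
  have v_nonneg: "0 \<le> v n" for n
    using w_le by (rule order_trans[OF abs_ge_zero])
  have partial_le: "(\<Sum>n<N. v n) \<le> V" for N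
    using \<open>v sums V\<close> v_nonneg by (metis sum_le_suminf finite_lessThan sums_summable sums_unique)
  have "(\<integral>\<^sup>+\<omega>. ennreal ((\<Sum>\<^sub>\<infinity>n. X n \<omega> * w n)\<^sup>2) \<partial>M)
      \<le> (\<integral>\<^sup>+\<omega>. ennreal V * (\<Sum>n. ennreal (v n * (X n \<omega>)\<^sup>2)) \<partial>M)"
  proof (intro nn_integral_mono infsum_square_le_weighted)
    show "\<bar>X n \<omega> * w n\<bar> \<le> v n * \<bar>X n \<omega>\<bar>" for n \<omega>
      using mult_right_mono[OF w_le[of n] abs_ge_zero[of "X n \<omega>"]] by (simp add: abs_mult mult.commute)
  qed (use v_nonneg partial_le in auto)
  also have "\<dots> = ennreal V * (\<Sum>n. \<integral>\<^sup>+\<omega>. ennreal (v n) * ennreal ((X n \<omega>)\<^sup>2) \<partial>M)"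
    by (simp add: nn_integral_cmult nn_integral_suminf v_nonneg ennreal_mult)
  also have "\<dots> = ennreal V * (\<Sum>n. ennreal (v n) * \<integral>\<^sup>+\<omega>. ennreal ((X n \<omega>)\<^sup>2) \<partial>M)"
    by (simp add: nn_integral_cmult)
  also have "\<dots> \<le> ennreal V * (\<Sum>n. ennreal (v n) * ennreal C)"
    by (intro mult_left_mono suminf_le moment) auto
  also have "(\<Sum>n. ennreal (v n) * ennreal C) = ennreal V * ennreal C"
    using \<open>v sums V\<close> v_nonneg
    by (simp add: ennreal_suminf_cmult suminf_ennreal2 sums_summable sums_unique[symmetric])
  finally show ?thesis by (simp add: mult.assoc)
qed

lemma L2norm_weighted_series_le:
  fixes X :: "nat \<Rightarrow> 'a \<Rightarrow> real" and w v :: "nat \<Rightarrow> real"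
  assumes [measurable]: "\<And>n. X n \<in> borel_measurable M"
    and "\<And>n. (\<integral>\<^sup>+\<omega>. ennreal ((X n \<omega>)\<^sup>2) \<partial>M) \<le> ennreal C" and "0 \<le> C"
    and "\<And>n. \<bar>w n\<bar> \<le> v n" and "v sums V"
  shows "integrable M (\<lambda>\<omega>. (\<Sum>\<^sub>\<infinity>n. X n \<omega> * w n)\<^sup>2)"
    and "L2norm M (\<lambda>\<omega>. \<Sum>\<^sub>\<infinity>n. X n \<omega> * w n) \<le> V * sqrt C"
proof -
  define S where "S \<omega> = (\<Sum>\<^sub>\<infinity>n. X n \<omega> * w n)" for \<omega>
  have "V \<ge> 0"
    using assms(4,5) by (metis abs_ge_zero order_trans suminf_nonneg sums_summable sums_unique)
  have S_sq_meas: "(\<lambda>\<omega>. (S \<omega>)\<^sup>2) \<in> borel_measurable M"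
    unfolding S_def by (intro borel_measurable_power borel_measurable_infsum_nat) measurable
  have bound: "(\<integral>\<^sup>+\<omega>. ennreal ((S \<omega>)\<^sup>2) \<partial>M) \<le> ennreal (V * V * C)"
    using nn_integral_weighted_series_square_le[OF assms(1,2,4,5)] \<open>V \<ge> 0\<close> \<open>0 \<le> C\<close>
    unfolding S_def by (simp add: ennreal_mult)
  then show "integrable M (\<lambda>\<omega>. (\<Sum>\<^sub>\<infinity>n. X n \<omega> * w n)\<^sup>2)"
    unfolding S_def[symmetric] using S_sq_meas
    by (intro integrableI_bounded) (auto simp: top.not_eq_extremum intro: le_less_trans)
  have "integral\<^sup>L M (\<lambda>\<omega>. (S \<omega>)\<^sup>2) = enn2real (\<integral>\<^sup>+\<omega>. ennreal ((S \<omega>)\<^sup>2) \<partial>M)"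
    by (rule integral_eq_nn_integral[OF S_sq_meas]) simp
  also have "\<dots> \<le> V * V * C"
    using bound \<open>V \<ge> 0\<close> \<open>0 \<le> C\<close> by (intro enn2real_leI) auto
  finally have "L2norm M S \<le> sqrt (V * V * C)"
    unfolding L2norm_def by simp
  then show "L2norm M (\<lambda>\<omega>. \<Sum>\<^sub>\<infinity>n. X n \<omega> * w n) \<le> V * sqrt C"
    using \<open>V \<ge> 0\<close> unfolding S_def by (simp add: real_sqrt_mult)
qed

lemma L2norm_kernelK_le:
  assumes [measurable]: "\<And>I. a I \<in> borel_measurable M"
    and moment: "\<And>I. (\<integral>\<^sup>+\<omega>. ennreal ((a I \<omega>)\<^sup>2) \<partial>M) \<le> ennreal C" and "0 \<le> C"
    and "0 \<le> x" "0 \<le> y" "x \<noteq> y"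
  shows "integrable M (\<lambda>\<omega>. (kernelK a x y \<omega>)\<^sup>2)"
    and "L2norm M (kernelK a x y) \<le> 2 * sqrt C / dyadic_dist x y"
proof -
  obtain g w where w_le: "\<And>n. \<bar>w n\<bar> \<le> (1/2) ^ n / dyadic_dist x y"
    and series: "\<And>\<omega>. kernelK a x y \<omega> = (\<Sum>\<^sub>\<infinity>n. a (g n) \<omega> * w n)"
    by (rule kernelK_eq_series[OF assms(4-6), where 'a = 'a]) blast
  have sums: "(\<lambda>n. (1/2) ^ n / dyadic_dist x y) sums (2 / dyadic_dist x y)"
    using sums_divide[OF geometric_sums[of "1/2::real"]] by simp
  have kernel: "kernelK a x y = (\<lambda>\<omega>. \<Sum>\<^sub>\<infinity>n. a (g n) \<omega> * w n)"
    using series by (rule ext)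
  note L2 = L2norm_weighted_series_le[where X = "\<lambda>n. a (g n)" and w = w
      and v = "\<lambda>n. (1/2) ^ n / dyadic_dist x y", OF _ moment \<open>0 \<le> C\<close> w_le sums]
  show "integrable M (\<lambda>\<omega>. (kernelK a x y \<omega>)\<^sup>2)"
    unfolding kernel using L2(1) by simp
  show "L2norm M (kernelK a x y) \<le> 2 * sqrt C / dyadic_dist x y"
    unfolding kernel using L2(2) by simp
qed

lemma square_le_exp_sum: "(y::real)\<^sup>2 \<le> 4 * (exp y + exp (- y))"
proof -
  have "\<bar>y\<bar> / 2 \<le> exp (\<bar>y\<bar> / 2)"
    using exp_ge_add_one_self[of "\<bar>y\<bar> / 2"] by linarith
  then have "(\<bar>y\<bar> / 2)\<^sup>2 \<le> (exp (\<bar>y\<bar> / 2))\<^sup>2"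
    by (intro power_mono) auto
  also have "\<dots> = exp \<bar>y\<bar>"
    by (simp flip: exp_double)
  also have "\<dots> \<le> exp y + exp (- y)"
    by (cases "0 \<le> y") auto
  finally show ?thesis by (simp add: power_divide)
qed

lemma le_exp_if_ln_le:
  assumes "ln (z::real) \<le> c"
  shows "z \<le> exp c"
proof (cases "z > 0")
  case True
  then show ?thesis using assms by (metis exp_le_cancel_iff exp_ln)
qed (use exp_gt_zero[of c] in linarith)

lemma subgaussian_second_moment:
  assumes "prob_space M" "subgaussian M \<nu> X"
  shows "(\<integral>\<^sup>+\<omega>. ennreal ((X \<omega>)\<^sup>2) \<partial>M) \<le> ennreal (16 * exp (\<nu> / 2) + 2 * (integral\<^sup>L M X)\<^sup>2)"
proof -
  interpret prob_space M by fact
  define m where "m = integral\<^sup>L M X"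
  define E where "E l = (\<lambda>\<omega>. exp (l * (X \<omega> - m)))" for l
  have E_int: "integrable M (E l)" for l
    using assms(2) unfolding subgaussian_def E_def m_def by blast
  have E_le: "integral\<^sup>L M (E l) \<le> exp (l\<^sup>2 * \<nu> / 2)" for l
    using assms(2) unfolding subgaussian_def eta_centered_def E_def m_def
    by (blast intro: le_exp_if_ln_le)
  define R where "R \<omega> = 8 * (E 1 \<omega> + E (-1) \<omega>) + 2 * m\<^sup>2" for \<omega>
  have X_sq_le: "(X \<omega>)\<^sup>2 \<le> R \<omega>" for \<omega>
  proof -
    have "(X \<omega>)\<^sup>2 \<le> 2 * (X \<omega> - m)\<^sup>2 + 2 * m\<^sup>2"
      using zero_le_power2[of "X \<omega> - 2 * m"] by (simp add: power2_eq_square algebra_simps)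
    then show ?thesis
      unfolding R_def E_def using square_le_exp_sum[of "X \<omega> - m"] by simp
  qed
  have "(\<integral>\<^sup>+\<omega>. ennreal ((X \<omega>)\<^sup>2) \<partial>M) \<le> (\<integral>\<^sup>+\<omega>. ennreal (R \<omega>) \<partial>M)"
    by (intro nn_integral_mono ennreal_leI X_sq_le)
  also have "\<dots> = ennreal (integral\<^sup>L M R)"
  proof (rule nn_integral_eq_integral)
    show "integrable M R" unfolding R_def using E_int by auto
    show "AE \<omega> in M. 0 \<le> R \<omega>" unfolding R_def E_def by (simp add: add_nonneg_nonneg)
  qed
  also have "integral\<^sup>L M R = 8 * (integral\<^sup>L M (E 1) + integral\<^sup>L M (E (-1))) + 2 * m\<^sup>2"
    unfolding R_def using E_int by (simp add: prob_space)
  also have "\<dots> \<le> 16 * exp (\<nu> / 2) + 2 * m\<^sup>2"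
    using E_le[of 1] E_le[of "-1"] by simp
  finally show ?thesis unfolding m_def by (simp add: ennreal_leI)
qed

lemma subgaussian_family_second_moment_le:
  assumes "prob_space M" "(\<lambda>I. integral\<^sup>L M (\<lambda>\<omega>. \<bar>a I \<omega>\<bar>)) summable_on UNIV"
    and "\<And>I. subgaussian M \<nu> (a I)"
  shows "(\<integral>\<^sup>+\<omega>. ennreal ((a I \<omega>)\<^sup>2) \<partial>M)
    \<le> ennreal (16 * exp (\<nu> / 2) + 2 * (\<Sum>\<^sub>\<infinity>J. integral\<^sup>L M (\<lambda>\<omega>. \<bar>a J \<omega>\<bar>))\<^sup>2)"
proof -
  have "\<bar>integral\<^sup>L M (a I)\<bar> \<le> integral\<^sup>L M (\<lambda>\<omega>. \<bar>a I \<omega>\<bar>)"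
    by (rule integral_abs_bound)
  also have "\<dots> = (\<Sum>\<^sub>\<infinity>J\<in>{I}. integral\<^sup>L M (\<lambda>\<omega>. \<bar>a J \<omega>\<bar>))"
    by simp
  also have "\<dots> \<le> (\<Sum>\<^sub>\<infinity>J. integral\<^sup>L M (\<lambda>\<omega>. \<bar>a J \<omega>\<bar>))"
    using assms(2) by (intro infsum_mono_neutral) auto
  finally have "(integral\<^sup>L M (a I))\<^sup>2 \<le> (\<Sum>\<^sub>\<infinity>J. integral\<^sup>L M (\<lambda>\<omega>. \<bar>a J \<omega>\<bar>))\<^sup>2"
    by (metis abs_ge_zero power2_abs power_mono)
  then show ?thesis
    by (intro order_trans[OF subgaussian_second_moment[OF assms(1,3)]] ennreal_leI) simp
qed

theorem theorem5p1:
  fixes M :: "'a measure" and a :: "int \<times> int \<Rightarrow> 'a \<Rightarrow> real" and \<nu> :: real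
  assumes "prob_space M"
    and "prob_space.indep_vars M (\<lambda>_. borel) a UNIV"
    and "(\<lambda>I. integral\<^sup>L M (\<lambda>\<omega>. \<bar>a I \<omega>\<bar>)) summable_on UNIV"
    and "\<nu> > 0"
    and "\<And>I. subgaussian M \<nu> (a I)"
  shows "\<exists>B. \<forall>x y x' y'. 0 \<le> x \<and> 0 \<le> y \<and> 0 \<le> x' \<and> 0 \<le> y' \<and> x \<noteq> y \<longrightarrow>
     integrable M (\<lambda>\<omega>. (kernelK a x y \<omega>)\<^sup>2) \<and>
     L2norm M (kernelK a x y) \<le> B / dyadic_dist x y \<and>
     (2 * dyadic_dist x' x \<le> dyadic_dist x y \<longrightarrow>
        L2norm M (\<lambda>\<omega>. kernelK a x' y \<omega> - kernelK a x y \<omega>)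
          \<le> B * dyadic_dist x' x / (dyadic_dist x y)\<^sup>2) \<and>
     (2 * dyadic_dist y' y \<le> dyadic_dist x y \<longrightarrow>
        L2norm M (\<lambda>\<omega>. kernelK a x y' \<omega> - kernelK a x y \<omega>)
          \<le> B * dyadic_dist y' y / (dyadic_dist x y)\<^sup>2)"
proof -
  define C where "C = 16 * exp (\<nu> / 2) + 2 * (\<Sum>\<^sub>\<infinity>J. integral\<^sup>L M (\<lambda>\<omega>. \<bar>a J \<omega>\<bar>))\<^sup>2"
  have "0 \<le> C" unfolding C_def by (intro add_nonneg_nonneg) auto
  have meas: "a I \<in> borel_measurable M" for I
    using assms(5) unfolding subgaussian_def by (blast intro: borel_measurable_integrable)
  have moment: "(\<integral>\<^sup>+\<omega>. ennreal ((a I \<omega>)\<^sup>2) \<partial>M) \<le> ennreal C" for I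
    unfolding C_def using assms(1,3,5) by (rule subgaussian_family_second_moment_le)
  have L2norm_zero: "L2norm M (\<lambda>\<omega>. f \<omega> - f \<omega>) = 0" for f :: "'a \<Rightarrow> real"
    unfolding L2norm_def by simp
  show ?thesis
  proof (intro exI[of _ "2 * sqrt C"] allI impI, goal_cases)
    case (1 x y x' y')
    then have xy: "0 \<le> x" "0 \<le> y" "0 \<le> x'" "0 \<le> y'" "x \<noteq> y" by auto
    have move_x: "kernelK a x' y = kernelK a x y" if "2 * dyadic_dist x' x \<le> dyadic_dist x y"
      using kernelK_eq_if_dyadic_dist_le xy that by blast
    have move_y: "kernelK a x y' = kernelK a x y" if "2 * dyadic_dist y' y \<le> dyadic_dist x y"
      using kernelK_eq_if_dyadic_dist_le[of y x y'] xy that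
      by (simp add: dyadic_dist_commute[of x y] kernelK_commute[of a x])
    show ?case
      using L2norm_kernelK_le[OF meas moment \<open>0 \<le> C\<close> xy(1,2,5)] move_x move_y L2norm_zero
        dyadic_dist_nonneg[OF xy(3,1)] dyadic_dist_nonneg[OF xy(4,2)] \<open>0 \<le> C\<close>
      by simp
  qed
qed

end
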